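(* Let $x,y\ge 2$ be coprime integers, $p\ge 1$ an integer, and $q=pxy-1$. Choose integers $i,j$ with $xj+yi=1$ and $0<i<x$ (so $j<0$). Let $G$ be the group generated by $a,b,t$ subject to the relations $a^x=b^y$ and $\mu^q\lambda^p=t^p$, where $\mu=b^ja^i$ and $\lambda=\mu^{-xy}a^x$. Then in every quotient $H$ of $G$ one has $t^p=a^{xp-i}b^{-j}$. Consequently, if $H$ is left-orderable, then (the images of) $t$, $a$ and $b$ all have the same sign with respect to any left order on $H$.
   Context: The group $G$ is the fundamental group of the complement of the $(p,q)$-cable of the $(x,y)$-torus knot; $\mu,\lambda$ are the meridian and longitude of the torus knot and $\mu,\lambda$ commute. A left order on a group $H$ is a strict total order with $ga<gb$ whenever $a<b$; its positive cone is $P=\{g: g>1\}$. Two elements have the same sign if both lie in $P$, both lie in $P^{-1}=\{g:g<1\}$, or both equal $1$. A left-orderable group is a nontrivial group admitting a left order. *)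

theory Defs
  imports "HOL-Algebra.Algebra"
begin

definition left_order :: "('a, 'b) monoid_scheme \<Rightarrow> ('a \<Rightarrow> 'a \<Rightarrow> bool) \<Rightarrow> bool" where
  "left_order H lt \<longleftrightarrow>
     (\<forall>u\<in>carrier H. \<not> lt u u) \<and>
     (\<forall>u\<in>carrier H. \<forall>v\<in>carrier H. \<forall>w\<in>carrier H. lt u v \<longrightarrow> lt v w \<longrightarrow> lt u w) \<and>
     (\<forall>u\<in>carrier H. \<forall>v\<in>carrier H. u = v \<or> lt u v \<or> lt v u) \<and>
     (\<forall>g\<in>carrier H. \<forall>u\<in>carrier H. \<forall>v\<in>carrier H. lt u v \<longrightarrow> lt (g \<otimes>\<^bsub>H\<^esub> u) (g \<otimes>\<^bsub>H\<^esub> v))"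

definition positive_cone :: "('a, 'b) monoid_scheme \<Rightarrow> ('a \<Rightarrow> 'a \<Rightarrow> bool) \<Rightarrow> 'a set" where
  "positive_cone H lt = {g \<in> carrier H. lt \<one>\<^bsub>H\<^esub> g}"

definition same_sign :: "('a, 'b) monoid_scheme \<Rightarrow> ('a \<Rightarrow> 'a \<Rightarrow> bool) \<Rightarrow> 'a \<Rightarrow> 'a \<Rightarrow> bool" where
  "same_sign H lt g h \<longleftrightarrow>
     (g \<in> positive_cone H lt \<and> h \<in> positive_cone H lt) \<or>
     (g \<in> (\<lambda>u. inv\<^bsub>H\<^esub> u) ` positive_cone H lt \<and> h \<in> (\<lambda>u. inv\<^bsub>H\<^esub> u) ` positive_cone H lt) \<or>
     (g = \<one>\<^bsub>H\<^esub> \<and> h = \<one>\<^bsub>H\<^esub>)"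

definition left_orderable :: "('a, 'b) monoid_scheme \<Rightarrow> bool" where
  "left_orderable H \<longleftrightarrow> group H \<and> carrier H \<noteq> {\<one>\<^bsub>H\<^esub>} \<and> (\<exists>lt. left_order H lt)"

end

theory Submission
  imports Defs
begin

text \<open>Since \<open>c = a^x = b^y\<close> commutes with \<open>a\<close> and \<open>b\<close>, it commutes with \<open>\<mu> = b^j a^i\<close>, so
  the relator collapses to \<open>t^p = \<mu>^(pxy-1) \<mu>^(-pxy) c^p = \<mu>^(-1) c^p = a^(xp-i) b^(-j)\<close>.  As \<open>j < 0 < xp - i\<close>, the right-hand side is
  a product of positive powers of \<open>a\<close> and \<open>b\<close>.  In a left-ordered group positive powers and
  products of elements of equal sign keep that sign; so \<open>a^x = b^y\<close> forces \<open>a\<close> and \<open>b\<close> to have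
  the same sign, and then \<open>t^p\<close> shows that \<open>t\<close> has it as well.\<close>

lemma (in group) inv_commutes:
  assumes "g \<otimes> h = h \<otimes> g" "g \<in> carrier G" "h \<in> carrier G"
  shows "inv g \<otimes> h = h \<otimes> inv g"
  by (metis assms conjugation_is_surj inv_closed inv_inv inv_solve_right m_closed)

lemma (in group) int_pow_commutes:
  assumes "g \<otimes> h = h \<otimes> g" "g \<in> carrier G" "h \<in> carrier G"
  shows "g [^] (k::int) \<otimes> h = h \<otimes> g [^] k"
proof -
  have nat_case: "g [^] n \<otimes> h = h \<otimes> g [^] n" for n :: nat
    using group_commutes_pow[OF assms] .
  show ?thesis
  proof (cases "k < 0")
    case True
    then have "g [^] k = inv (g [^] nat (- k))"
      using int_pow_neg_int[OF assms(2), of "nat (- k)"] by simp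
    then show ?thesis using inv_commutes[OF nat_case] assms by simp
  next
    case False
    then have "g [^] k = g [^] nat k"
      using int_pow_int[where x = g and n = "nat k"] by simp
    then show ?thesis using nat_case by simp
  qed
qed

lemma (in group) cable_relator_eq:
  fixes x y p i j :: int
  assumes a: "a \<in> carrier G" and b: "b \<in> carrier G" and ab: "a [^] x = b [^] y"
  shows "(b [^] j \<otimes> a [^] i) [^] (p * x * y - 1) \<otimes>
           ((b [^] j \<otimes> a [^] i) [^] (- (x * y)) \<otimes> a [^] x) [^] p
         = a [^] (x * p - i) \<otimes> b [^] (- j)"
proof -
  define \<mu> where "\<mu> = b [^] j \<otimes> a [^] i"
  define c where "c = a [^] x"
  have carr: "\<mu> \<in> carrier G" "c \<in> carrier G" using a b by (auto simp: \<mu>_def c_def)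
  have ca: "c \<otimes> a = a \<otimes> c" and cb: "c \<otimes> b = b \<otimes> c"
    using int_pow_commutes[of a a x] int_pow_commutes[of b b y] a b by (auto simp: c_def ab)
  have "c \<otimes> \<mu> = (c \<otimes> b [^] j) \<otimes> a [^] i"
    using a b carr by (simp add: \<mu>_def m_assoc)
  also have "\<dots> = b [^] j \<otimes> (c \<otimes> a [^] i)"
    using int_pow_commutes[OF cb[symmetric], of j] a b carr by (metis int_pow_closed m_assoc)
  also have "\<dots> = \<mu> \<otimes> c"
    using int_pow_commutes[OF ca[symmetric], of i] a b carr by (metis \<mu>_def int_pow_closed m_assoc)
  finally have c\<mu>: "c \<otimes> \<mu> = \<mu> \<otimes> c" .
  have "(\<mu> [^] (- (x * y)) \<otimes> c) [^] p = \<mu> [^] (- (x * y) * p) \<otimes> c [^] p"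
    using int_pow_mult_distrib int_pow_commutes[OF c\<mu>[symmetric]] carr by (simp add: int_pow_pow)
  moreover have "\<mu> [^] (p * x * y - 1) \<otimes> \<mu> [^] (- (x * y) * p) = inv \<mu>"
    using carr(1) int_pow_neg[OF carr(1), of 1] by (simp flip: int_pow_mult)
  ultimately have "\<mu> [^] (p * x * y - 1) \<otimes> (\<mu> [^] (- (x * y)) \<otimes> c) [^] p = inv \<mu> \<otimes> c [^] p"
    using carr by (simp flip: m_assoc)
  also have "\<dots> = a [^] (- i) \<otimes> (b [^] (- j) \<otimes> b [^] (y * p))"
    using a b by (simp add: \<mu>_def c_def ab inv_mult_group int_pow_neg int_pow_pow m_assoc)
  also have "\<dots> = a [^] (- i) \<otimes> (b [^] (y * p) \<otimes> b [^] (- j))"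
    using b by (simp add: add.commute flip: int_pow_mult)
  also have "\<dots> = a [^] (- i) \<otimes> a [^] (x * p) \<otimes> b [^] (- j)"
    using a b by (simp add: m_assoc flip: int_pow_pow ab)
  also have "\<dots> = a [^] (x * p - i) \<otimes> b [^] (- j)"
    using a by (simp flip: int_pow_mult)
  finally show ?thesis unfolding \<mu>_def c_def .
qed

definition order_sign :: "('a, 'b) monoid_scheme \<Rightarrow> ('a \<Rightarrow> 'a \<Rightarrow> bool) \<Rightarrow> 'a \<Rightarrow> int" where
  "order_sign G lt g = (if lt \<one>\<^bsub>G\<^esub> g then 1 else if lt g \<one>\<^bsub>G\<^esub> then -1 else 0)"

locale left_ordered_group = group G for G (structure) +
  fixes lt :: "'a \<Rightarrow> 'a \<Rightarrow> bool"
  assumes left_order: "left_order G lt"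
begin

lemma lt_irrefl: "u \<in> carrier G \<Longrightarrow> \<not> lt u u"
  and lt_trans: "\<lbrakk>lt u v; lt v w; u \<in> carrier G; v \<in> carrier G; w \<in> carrier G\<rbrakk> \<Longrightarrow> lt u w"
  and lt_total: "\<lbrakk>u \<in> carrier G; v \<in> carrier G\<rbrakk> \<Longrightarrow> u = v \<or> lt u v \<or> lt v u"
  and lt_mult_left: "\<lbrakk>lt u v; g \<in> carrier G; u \<in> carrier G; v \<in> carrier G\<rbrakk> \<Longrightarrow> lt (g \<otimes> u) (g \<otimes> v)"
  using left_order unfolding left_order_def by blast+

lemma lt_one_iff_inv_positive:
  assumes "g \<in> carrier G"
  shows "lt g \<one> \<longleftrightarrow> g \<in> (\<lambda>u. inv u) ` positive_cone G lt"
proof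
  assume "lt g \<one>"
  then have "lt (inv g \<otimes> g) (inv g \<otimes> \<one>)" using assms by (intro lt_mult_left) auto
  then show "g \<in> (\<lambda>u. inv u) ` positive_cone G lt"
    using assms by (intro image_eqI[of _ _ "inv g"]) (auto simp: positive_cone_def)
next
  assume "g \<in> (\<lambda>u. inv u) ` positive_cone G lt"
  then obtain u where u: "u \<in> carrier G" "lt \<one> u" "g = inv u"
    unfolding positive_cone_def by auto
  then have "lt (inv u \<otimes> \<one>) (inv u \<otimes> u)" by (intro lt_mult_left) auto
  then show "lt g \<one>" using u by simp
qed

lemma not_lt_one_both: "g \<in> carrier G \<Longrightarrow> \<not> (lt \<one> g \<and> lt g \<one>)"
  using lt_trans[of \<one> g \<one>] lt_irrefl[of \<one>] by auto

lemma same_sign_iff_order_sign_eq: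
  assumes "g \<in> carrier G" "h \<in> carrier G"
  shows "same_sign G lt g h \<longleftrightarrow> order_sign G lt g = order_sign G lt h"
  using assms lt_one_iff_inv_positive[OF assms(1)] lt_one_iff_inv_positive[OF assms(2)]
    not_lt_one_both[OF assms(1)] not_lt_one_both[OF assms(2)]
    lt_total[of \<one> g] lt_total[of \<one> h] lt_irrefl[of \<one>]
  unfolding same_sign_def order_sign_def positive_cone_def by auto

lemma one_lt_mult:
  assumes "g \<in> carrier G" "h \<in> carrier G" "lt \<one> g" "lt \<one> h"
  shows "lt \<one> (g \<otimes> h)"
proof -
  have "lt (g \<otimes> \<one>) (g \<otimes> h)" using assms by (intro lt_mult_left) auto
  then show ?thesis using assms lt_trans[of \<one> g "g \<otimes> h"] by simp
qed

lemma mult_lt_one: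
  assumes "g \<in> carrier G" "h \<in> carrier G" "lt g \<one>" "lt h \<one>"
  shows "lt (g \<otimes> h) \<one>"
proof -
  have "lt (g \<otimes> h) (g \<otimes> \<one>)" using assms by (intro lt_mult_left) auto
  then show ?thesis using assms lt_trans[of "g \<otimes> h" g \<one>] by simp
qed

lemma order_sign_mult:
  assumes "g \<in> carrier G" "h \<in> carrier G" "order_sign G lt g = order_sign G lt h"
  shows "order_sign G lt (g \<otimes> h) = order_sign G lt g"
  using assms one_lt_mult[OF assms(1,2)] mult_lt_one[OF assms(1,2)]
    not_lt_one_both[OF assms(1)] not_lt_one_both[OF assms(2)] not_lt_one_both[of "g \<otimes> h"]
    lt_total[of \<one> g] lt_total[of \<one> h]
  unfolding order_sign_def by (auto split: if_splits)

lemma order_sign_int_pow: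
  assumes "g \<in> carrier G" "k > 0"
  shows "order_sign G lt (g [^] (k::int)) = order_sign G lt g"
proof -
  have "order_sign G lt (g [^] Suc n) = order_sign G lt g" for n
    by (induction n) (use assms order_sign_mult in auto)
  moreover have "k = int (Suc (nat (k - 1)))" using assms(2) by simp
  ultimately show ?thesis by (metis int_pow_int)
qed

end

theorem lemma3p1:
  fixes H (structure)
    and x y p q i j :: int
    and a b t :: 'a
  assumes "x \<ge> 2" and "y \<ge> 2" and "coprime x y"
    and "p \<ge> 1" and "q = p * x * y - 1"
    and "x * j + y * i = 1" and "0 < i" and "i < x"
    and "group H"
    and "a \<in> carrier H" and "b \<in> carrier H" and "t \<in> carrier H"
    and "generate H {a, b, t} = carrier H"
    and "a [^] x = b [^] y"
    and "(b [^] j \<otimes> a [^] i) [^] q \<otimes>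
           ((b [^] j \<otimes> a [^] i) [^] (- (x * y)) \<otimes> a [^] x) [^] p = t [^] p"
  shows "t [^] p = a [^] (x * p - i) \<otimes> b [^] (- j)
         \<and> (left_orderable H \<longrightarrow>
              (\<forall>lt. left_order H lt \<longrightarrow>
                 same_sign H lt t a \<and> same_sign H lt a b \<and> same_sign H lt t b))"
proof -
  interpret group H by fact
  have tp: "t [^] p = a [^] (x * p - i) \<otimes> b [^] (- j)"
    using assms(15) cable_relator_eq[OF assms(10,11,14)] by (simp add: assms(5))
  have "x * j < 0" using assms(2,6,7) by (smt (verit) mult_le_cancel_left1)
  then have "- j > 0" using assms(1) by (simp add: mult_less_0_iff)
  have "x * p - i > 0" using assms(1,4,8) by (smt (verit) mult_le_cancel_left1)
  have "same_sign H lt t a \<and> same_sign H lt a b \<and> same_sign H lt t b" if "left_order H lt" for lt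
  proof -
    interpret left_ordered_group H lt by unfold_locales fact
    have sab: "order_sign H lt a = order_sign H lt b"
      using order_sign_int_pow[of a x] order_sign_int_pow[of b y] assms(1,2,10,11,14) by simp
    have "order_sign H lt t = order_sign H lt (a [^] (x * p - i) \<otimes> b [^] (- j))"
      using order_sign_int_pow[of t p] tp assms(4,12) by simp
    also have "\<dots> = order_sign H lt a"
      using order_sign_mult order_sign_int_pow[of a "x * p - i"] order_sign_int_pow[of b "- j"]
        \<open>x * p - i > 0\<close> \<open>- j > 0\<close> sab assms(10,11) by simp
    finally show ?thesis using same_sign_iff_order_sign_eq sab assms(10,11,12) by simp
  qed
  then show ?thesis using tp by blast
qed

end
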